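(* Let $(X_t)_{t\in\mathbb{N}}$ be real-valued random variables on $\Omega$ with $X_t$ $\mathcal{F}_t$-measurable for each $t$. Let $\mathcal{P}$ be a family of probability measures on $\mathcal{F}$ such that under each $\mathbb{P}\in\mathcal{P}$ the sequence $(X_t)_{t\in\mathbb{N}}$ is i.i.d. with $\mathbb{E}_{\mathbb{P}}[|X_1|]<\infty$, and assume the centered uniform integrability condition $$\lim_{K\to\infty}\sup_{\mathbb{P}\in\mathcal{P}}\mathbb{E}_{\mathbb{P}}\Big[|X_1-\mathbb{E}_{\mathbb{P}}[X_1]|\,\mathbf{1}_{\{|X_1-\mathbb{E}_{\mathbb{P}}[X_1]|>K\}}\Big]=0.$$ Let $A_{\mathrm{div}}=\big\{\lim_{t\to\infty}\frac1t\sum_{i=1}^tX_i \text{ does not exist in }\mathbb{R}\big\}$. Then $\mu^*(A_{\mathrm{div}})=0$.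
   Context: Standing setup: $(\Omega, (\mathcal{F}_t)_{t\in\mathbb{N}_0}, \mathcal{F})$ is a filtered measurable space with $\mathcal{F} = \sigma\big(\bigcup_{t} \mathcal{F}_t\big)$. A stopping time is a map $\tau:\Omega\to\mathbb{N}_0\cup\{\infty\}$ with $\{\tau \le t\}\in\mathcal{F}_t$ for all $t$; $\mathcal{T}$ denotes the set of all stopping times. The inverse-capital measure of $A\subseteq\Omega$ with respect to the family $\mathcal{P}$ is $\mu^*(A) = \inf_{\tau\in\mathcal{T}:\, A\subseteq\{\tau<\infty\}} \sup_{\mathbb{P}\in\mathcal{P}} \mathbb{P}(\tau<\infty)$. *)

theory Defs
  imports "HOL-Probability.Probability"
begin

definition filtered_space :: "'a set \<Rightarrow> (nat \<Rightarrow> 'a set set) \<Rightarrow> 'a set set \<Rightarrow> bool" where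
  "filtered_space \<Omega> F \<F> \<longleftrightarrow>
     (\<forall>t. sigma_algebra \<Omega> (F t)) \<and> (\<forall>t. F t \<subseteq> F (Suc t)) \<and>
     \<F> = sigma_sets \<Omega> (\<Union>t. F t)"

definition stopping_time_nat :: "'a set \<Rightarrow> (nat \<Rightarrow> 'a set set) \<Rightarrow> ('a \<Rightarrow> enat) \<Rightarrow> bool" where
  "stopping_time_nat \<Omega> F \<tau> \<longleftrightarrow> (\<forall>t::nat. {\<omega>\<in>\<Omega>. \<tau> \<omega> \<le> enat t} \<in> F t)"

definition inv_capital :: "'a set \<Rightarrow> (nat \<Rightarrow> 'a set set) \<Rightarrow> 'a measure set \<Rightarrow> 'a set \<Rightarrow> ennreal" where
  "inv_capital \<Omega> F \<P> A =
     (INF \<tau> \<in> {\<tau>. stopping_time_nat \<Omega> F \<tau> \<and> A \<subseteq> {\<omega>\<in>\<Omega>. \<tau> \<omega> < \<infinity>}}.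
        SUP P \<in> \<P>. emeasure P {\<omega>\<in>\<Omega>. \<tau> \<omega> < \<infinity>})"

end

theory Submission
  imports Defs
begin

text \<open>
  Non-convergence of the running means \<open>a\<^sub>n\<close> can be detected without knowing their limit:
  stop as soon as two means \<open>a\<^sub>m, a\<^sub>n\<close> with \<open>m, n \<ge> N\<^sub>k\<close> differ by more than \<open>2/(k+1)\<close>.
  Then one of them is \<open>1/(k+1)\<close>-far from the mean under \<open>P\<close>, whatever \<open>P \<in> \<P>\<close> is, so it suffices
  to choose \<open>N\<^sub>k\<close> such that \<open>P(\<exists>n\<ge>N\<^sub>k. |a\<^sub>n - \<mu>\<^sub>P| > 1/(k+1)) \<le> \<epsilon> / 2^(k+1)\<close> uniformly in \<open>P\<close>.

  Such a uniform tail bound comes from truncating \<open>X - \<mu>\<^sub>P\<close> at a level \<open>K\<close> provided by the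
  uniform integrability. The clipped means obey Hoeffding's inequality, whose tails are summable
  uniformly in \<open>P\<close>; the excesses over \<open>K\<close> are nonnegative, i.i.d. and small in mean, and are
  controlled by the maximal inequality \<open>\<delta> P(\<exists>k. W\<^sub>1 + \<dots> + W\<^sub>k > k\<delta>) \<le> E W\<^sub>1\<close>, proved by
  Garsia's argument for the maximal ergodic lemma.
\<close>

lemma (in prob_space) indep_vars_measurable:
  "indep_vars M' X I \<Longrightarrow> i \<in> I \<Longrightarrow> X i \<in> M \<rightarrow>\<^sub>M M' i"
  unfolding indep_vars_def by blast

lemma integrable_of_same_distr:
  fixes X Y :: "'a \<Rightarrow> real"
  assumes "X \<in> borel_measurable M" "Y \<in> borel_measurable M"
    and "distr M borel X = distr M borel Y" and "integrable M Y"
  shows "integrable M X"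
proof -
  have "integrable (distr M borel Y) (\<lambda>x. x)"
    using assms(2,4) by (subst integrable_distr_eq) auto
  then have "integrable (distr M borel X) (\<lambda>x. x)"
    using assms(3) by simp
  then show ?thesis
    using assms(1) by (subst (asm) integrable_distr_eq) auto
qed

lemma distr_borel_compose_eq:
  assumes "X \<in> borel_measurable M" "Y \<in> borel_measurable M"
    and "distr M borel X = distr M borel Y" and g: "g \<in> borel_measurable borel"
  shows "distr M borel (\<lambda>x. g (X x)) = distr M borel (\<lambda>x. g (Y x))"
  using assms distr_distr[OF g, of X M] distr_distr[OF g, of Y M] by (simp add: comp_def)

section \<open>A maximal inequality for nonnegative i.i.d. sequences\<close>

definition running_max :: "real \<Rightarrow> nat \<Rightarrow> (nat \<Rightarrow> real) \<Rightarrow> real" where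
  "running_max \<delta> n y = Max ((\<lambda>k. \<Sum>i<k. (y i - \<delta>)) ` {..n})"

lemma running_max_ge: "k \<le> n \<Longrightarrow> (\<Sum>i<k. (y i - \<delta>)) \<le> running_max \<delta> n y"
  unfolding running_max_def by (intro Max_ge) auto

lemma running_max_nonneg: "0 \<le> running_max \<delta> n y"
  using running_max_ge[of 0 n y \<delta>] by simp

lemma running_max_le_sum_abs: "running_max \<delta> n y \<le> (\<Sum>i<n. \<bar>y i - \<delta>\<bar>)"
  unfolding running_max_def
proof (subst Max_le_iff, simp, simp, clarify)
  fix k assume "k \<le> n"
  have "(\<Sum>i<k. y i - \<delta>) \<le> (\<Sum>i<k. \<bar>y i - \<delta>\<bar>)"
    by (intro sum_mono) auto
  also have "\<dots> \<le> (\<Sum>i<n. \<bar>y i - \<delta>\<bar>)"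
    using \<open>k \<le> n\<close> by (intro sum_mono2) auto
  finally show "(\<Sum>i<k. y i - \<delta>) \<le> (\<Sum>i<n. \<bar>y i - \<delta>\<bar>)" .
qed

lemma running_max_pos_iff:
  "0 < running_max \<delta> n y \<longleftrightarrow> (\<exists>k\<in>{1..n}. real k * \<delta> < (\<Sum>i<k. y i))"
proof -
  have "0 < running_max \<delta> n y \<longleftrightarrow> (\<exists>k\<in>{..n}. real k * \<delta> < (\<Sum>i<k. y i))"
    unfolding running_max_def by (subst Max_gr_iff) (auto simp: sum_subtractf)
  also have "\<dots> \<longleftrightarrow> (\<exists>k\<in>{1..n}. real k * \<delta> < (\<Sum>i<k. y i))"
  proof
    assume "\<exists>k\<in>{..n}. real k * \<delta> < (\<Sum>i<k. y i)"
    then obtain k where k: "k \<le> n" "real k * \<delta> < (\<Sum>i<k. y i)" by auto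
    then have "k \<noteq> 0" by (intro notI) simp
    with k show "\<exists>k\<in>{1..n}. real k * \<delta> < (\<Sum>i<k. y i)" by auto
  qed auto
  finally show ?thesis .
qed

lemma running_max_restrict: "running_max \<delta> n (restrict y {..<n}) = running_max \<delta> n y"
  unfolding running_max_def by (intro arg_cong[where f=Max] image_cong refl sum.cong) auto

lemma running_max_shift:
  assumes "0 \<le> y 0"
  shows "running_max \<delta> n y - running_max \<delta> n (y \<circ> Suc)
           \<le> y 0 - (if 0 < running_max \<delta> n y then \<delta> else 0)"
proof (cases "0 < running_max \<delta> n y")
  case True
  have "running_max \<delta> n y \<in> (\<lambda>k. \<Sum>i<k. (y i - \<delta>)) ` {..n}"
    unfolding running_max_def by (intro Max_in) auto
  then obtain k where k: "k \<le> n" "running_max \<delta> n y = (\<Sum>i<k. (y i - \<delta>))"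
    by blast
  with True obtain j where j: "k = Suc j" by (cases k) auto
  have "running_max \<delta> n y = (y 0 - \<delta>) + (\<Sum>i<j. ((y \<circ> Suc) i - \<delta>))"
    using k(2) unfolding j sum.lessThan_Suc_shift by simp
  also have "\<dots> \<le> (y 0 - \<delta>) + running_max \<delta> n (y \<circ> Suc)"
    using k(1) j by (intro add_left_mono running_max_ge) auto
  finally show ?thesis using True by simp
next
  case False
  then show ?thesis using assms running_max_nonneg[of \<delta> n "y \<circ> Suc"] by simp
qed

lemma borel_measurable_running_max:
  "running_max \<delta> n \<in> borel_measurable (\<Pi>\<^sub>M i\<in>{..<n}. borel)"
  unfolding running_max_def[abs_def]
  by (intro borel_measurable_Max borel_measurable_sum borel_measurable_diff
        measurable_component_singleton) auto

lemma (in prob_space) iid_block_distr: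
  fixes W :: "nat \<Rightarrow> 'a \<Rightarrow> real"
  assumes indep: "indep_vars (\<lambda>_. borel) W {1..}"
    and ident: "\<And>i. 1 \<le> i \<Longrightarrow> distr M borel (W i) = distr M borel (W 1)"
    and c: "1 \<le> c"
  shows "distr M (\<Pi>\<^sub>M i\<in>{..<n}. borel) (\<lambda>x. \<lambda>i\<in>{..<n}. W (i + c) x)
           = (\<Pi>\<^sub>M i\<in>{..<n}. distr M borel (W 1))"
proof -
  define D where "D = distr M borel (W 1)"
  define K where "K = {c..c + n}"
  define \<Phi> where "\<Phi> x = (\<lambda>i\<in>K. W i x)" for x
  define \<pi> where "\<pi> \<omega> = (\<lambda>i\<in>{..<n}. \<omega> (i + c))" for \<omega> :: "nat \<Rightarrow> real"
  have rv: "W i \<in> borel_measurable M" if "1 \<le> i" for i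
    using indep_vars_measurable[OF indep] that by simp
  have K: "K \<noteq> {}" "K \<subseteq> {1..}" "\<And>i. i < n \<Longrightarrow> i + c \<in> K"
    using c by (auto simp: K_def)
  have sets_D: "sets (\<Pi>\<^sub>M i\<in>I. D) = sets (\<Pi>\<^sub>M i\<in>I. borel)" for I :: "nat set"
    by (rule sets_PiM_cong) (auto simp: D_def)
  have \<Phi>_meas: "\<Phi> \<in> M \<rightarrow>\<^sub>M (\<Pi>\<^sub>M i\<in>K. borel)"
    unfolding \<Phi>_def using K rv by (intro measurable_restrict) auto
  have \<pi>_meas: "\<pi> \<in> (\<Pi>\<^sub>M i\<in>K. borel) \<rightarrow>\<^sub>M (\<Pi>\<^sub>M i\<in>{..<n}. borel)"
    unfolding \<pi>_def[abs_def] using K by (intro measurable_restrict measurable_component_singleton) auto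
  have law_K: "distr M (\<Pi>\<^sub>M i\<in>K. borel) \<Phi> = (\<Pi>\<^sub>M i\<in>K. D)"
  proof -
    have "indep_vars (\<lambda>_. borel) W K"
      using indep_vars_subset[OF indep K(2)] .
    then have "distr M (\<Pi>\<^sub>M i\<in>K. borel) \<Phi> = (\<Pi>\<^sub>M i\<in>K. distr M borel (W i))"
      unfolding \<Phi>_def using K rv by (subst (asm) indep_vars_iff_distr_eq_PiM') auto
    also have "\<dots> = (\<Pi>\<^sub>M i\<in>K. D)"
      unfolding D_def using K by (intro PiM_cong refl ident) auto
    finally show ?thesis .
  qed
  have "distr M (\<Pi>\<^sub>M i\<in>{..<n}. borel) (\<lambda>x. \<lambda>i\<in>{..<n}. W (i + c) x)
          = distr (distr M (\<Pi>\<^sub>M i\<in>K. borel) \<Phi>) (\<Pi>\<^sub>M i\<in>{..<n}. borel) \<pi>"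
  proof -
    have "\<pi> \<circ> \<Phi> = (\<lambda>x. \<lambda>i\<in>{..<n}. W (i + c) x)"
      using K(3) by (auto simp: \<pi>_def \<Phi>_def fun_eq_iff)
    then show ?thesis by (simp add: distr_distr[OF \<pi>_meas \<Phi>_meas])
  qed
  also have "\<dots> = distr (\<Pi>\<^sub>M i\<in>K. D) (\<Pi>\<^sub>M i\<in>{..<n}. D) \<pi>"
    unfolding law_K by (intro distr_cong) (auto simp: sets_D)
  also have "\<dots> = (\<Pi>\<^sub>M i\<in>{..<n}. D)"
    unfolding \<pi>_def[abs_def] using K
    by (intro distr_PiM_reindex) (auto simp: D_def inj_on_def intro!: prob_space_distr rv)
  finally show ?thesis unfolding D_def .
qed

lemma (in prob_space) iid_block_integral:
  fixes W :: "nat \<Rightarrow> 'a \<Rightarrow> real" and f :: "(nat \<Rightarrow> real) \<Rightarrow> real"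
  assumes indep: "indep_vars (\<lambda>_. borel) W {1..}"
    and ident: "\<And>i. 1 \<le> i \<Longrightarrow> distr M borel (W i) = distr M borel (W 1)"
    and c: "1 \<le> c"
    and f: "f \<in> borel_measurable (\<Pi>\<^sub>M i\<in>{..<n}. borel)"
  shows "expectation (\<lambda>x. f (\<lambda>i\<in>{..<n}. W (i + c) x))
           = integral\<^sup>L (\<Pi>\<^sub>M i\<in>{..<n}. distr M borel (W 1)) f"
proof -
  have "(\<lambda>x. \<lambda>i\<in>{..<n}. W (i + c) x) \<in> M \<rightarrow>\<^sub>M (\<Pi>\<^sub>M i\<in>{..<n}. borel)"
    using indep_vars_measurable[OF indep] c by (intro measurable_restrict) auto
  from integral_distr[OF this f] show ?thesis
    by (simp add: iid_block_distr[OF indep ident c])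
qed

lemma (in prob_space) integrable_running_max:
  fixes V :: "nat \<Rightarrow> 'a \<Rightarrow> real"
  assumes int: "\<And>i. i < n \<Longrightarrow> integrable M (V i)"
  shows "integrable M (\<lambda>x. running_max \<delta> n (\<lambda>i. V i x))"
proof (rule Bochner_Integration.integrable_bound)
  show "integrable M (\<lambda>x. \<Sum>i<n. \<bar>V i x - \<delta>\<bar>)"
    using int by (intro Bochner_Integration.integrable_sum Bochner_Integration.integrable_abs
        Bochner_Integration.integrable_diff) auto
  show "(\<lambda>x. running_max \<delta> n (\<lambda>i. V i x)) \<in> borel_measurable M"
    unfolding running_max_def using int
    by (intro borel_measurable_Max borel_measurable_sum borel_measurable_diff) auto
  show "AE x in M. norm (running_max \<delta> n (\<lambda>i. V i x)) \<le> norm (\<Sum>i<n. \<bar>V i x - \<delta>\<bar>)"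
    using running_max_nonneg running_max_le_sum_abs
    by (intro AE_I2) (auto intro: order_trans[OF _ abs_ge_self])
qed

lemma (in prob_space) iid_nonneg_maximal_inequality_finite:
  fixes W :: "nat \<Rightarrow> 'a \<Rightarrow> real"
  assumes indep: "indep_vars (\<lambda>_. borel) W {1..}"
    and ident: "\<And>i. 1 \<le> i \<Longrightarrow> distr M borel (W i) = distr M borel (W 1)"
    and int: "integrable M (W 1)"
    and nonneg: "\<And>i x. x \<in> space M \<Longrightarrow> 0 \<le> W i x"
  shows "\<delta> * prob {x\<in>space M. \<exists>k\<in>{1..n}. real k * \<delta> < (\<Sum>i=1..k. W i x)} \<le> expectation (W 1)"
proof -
  have int_W: "integrable M (W i)" if "1 \<le> i" for i
    by (rule integrable_of_same_distr[OF _ _ ident[OF that] int])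
      (use indep_vars_measurable[OF indep] that in auto)
  define R where "R c x = running_max \<delta> n (\<lambda>i. W (i + c) x)" for c x
  have R_int: "integrable M (R c)" if "1 \<le> c" for c
    unfolding R_def[abs_def] using that by (intro integrable_running_max int_W) simp
  have R_expectation: "expectation (R c) = integral\<^sup>L (\<Pi>\<^sub>M i\<in>{..<n}. distr M borel (W 1)) (running_max \<delta> n)"
    if "1 \<le> c" for c
    using iid_block_integral[OF indep ident that borel_measurable_running_max]
    by (simp add: R_def[abs_def] running_max_restrict restrict_def[symmetric])
  define S where "S = {x\<in>space M. 0 < R 1 x}"
  have S_eq: "S = {x\<in>space M. \<exists>k\<in>{1..n}. real k * \<delta> < (\<Sum>i=1..k. W i x)}"
    unfolding S_def R_def running_max_pos_iff by (simp add: sum.atLeast1_atMost_eq)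
  have "R 1 \<in> borel_measurable M"
    using R_int[of 1] by (simp add: borel_measurable_integrable)
  then have S_sets: "S \<in> events"
    unfolding S_def by measurable
  \<comment> \<open>Garsia's argument: R 1 and R 2 have the same law, while pointwise R 1 - R 2 is at most
    W 1 - \<delta> on S and at most W 1 elsewhere.\<close>
  have R_shift: "R 1 x - R 2 x \<le> W 1 x - \<delta> * indicator S x" if "x \<in> space M" for x
  proof -
    have "(\<lambda>i. W (i + 1) x) \<circ> Suc = (\<lambda>i. W (i + 2) x)"
      by (simp add: comp_def)
    then show ?thesis
      using running_max_shift[of "\<lambda>i. W (i + 1) x" \<delta> n] nonneg[OF that] that
      by (simp add: R_def S_def indicator_def split: if_splits)
  qed
  have int_S: "integrable M (\<lambda>x. \<delta> * indicator S x :: real)"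
    using S_sets by (intro integrable_mult_right integrable_real_indicator) (auto simp: less_top[symmetric])
  have "0 = expectation (\<lambda>x. R 1 x - R 2 x)"
    using R_int R_expectation by simp
  also have "\<dots> \<le> expectation (\<lambda>x. W 1 x - \<delta> * indicator S x)"
    using R_shift R_int int int_S by (intro integral_mono) auto
  also have "\<dots> = expectation (W 1) - \<delta> * prob S"
    using S_sets int int_S by simp
  finally show ?thesis unfolding S_eq by simp
qed

lemma (in prob_space) iid_nonneg_maximal_inequality:
  fixes W :: "nat \<Rightarrow> 'a \<Rightarrow> real"
  assumes indep: "indep_vars (\<lambda>_. borel) W {1..}"
    and ident: "\<And>i. 1 \<le> i \<Longrightarrow> distr M borel (W i) = distr M borel (W 1)"
    and int: "integrable M (W 1)"
    and nonneg: "\<And>i x. x \<in> space M \<Longrightarrow> 0 \<le> W i x"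
  shows "\<delta> * prob {x\<in>space M. \<exists>k\<ge>1. real k * \<delta> < (\<Sum>i=1..k. W i x)} \<le> expectation (W 1)"
proof -
  define A where "A n = {x\<in>space M. \<exists>k\<in>{1..n}. real k * \<delta> < (\<Sum>i=1..k. W i x)}" for n
  have sum_meas[measurable]: "(\<lambda>x. \<Sum>i=1..k. W i x) \<in> borel_measurable M" for k
    using indep_vars_measurable[OF indep] by (intro borel_measurable_sum) auto
  have "A n = (\<Union>k\<in>{1..n}. {x\<in>space M. real k * \<delta> < (\<Sum>i=1..k. W i x)})" for n
    unfolding A_def by auto
  moreover have "{x\<in>space M. real k * \<delta> < (\<Sum>i=1..k. W i x)} \<in> events" for k
    by measurable
  ultimately have A_sets: "range A \<subseteq> events"
    by auto
  have "incseq A"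
    unfolding incseq_def A_def by fastforce
  then have "(\<lambda>n. \<delta> * prob (A n)) \<longlonglongrightarrow> \<delta> * prob (\<Union>n. A n)"
    by (intro tendsto_mult_left finite_Lim_measure_incseq A_sets)
  then have "\<delta> * prob (\<Union>n. A n) \<le> expectation (W 1)"
    using iid_nonneg_maximal_inequality_finite[OF assms] by (intro LIMSEQ_le_const2) (auto simp: A_def)
  moreover have "(\<Union>n. A n) = {x\<in>space M. \<exists>k\<ge>1. real k * \<delta> < (\<Sum>i=1..k. W i x)}"
    unfolding A_def by fastforce
  ultimately show ?thesis by simp
qed

section \<open>Truncation and Hoeffding bounds\<close>

definition clip :: "real \<Rightarrow> real \<Rightarrow> real" where
  "clip K y = max (- K) (min K y)"

lemma borel_measurable_clip[measurable]: "clip K \<in> borel_measurable borel"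
  unfolding clip_def[abs_def] by measurable

lemma abs_diff_clip_le: "\<bar>y - clip K y\<bar> \<le> max (\<bar>y\<bar> - K) 0"
  unfolding clip_def by (simp split: split_max split_min abs_split)

lemma clipped_mean_far:
  fixes y :: "nat \<Rightarrow> real"
  assumes n: "0 < n" and far: "\<gamma> < \<bar>(\<Sum>i=1..n. y i) / n\<bar>" and m: "\<bar>m\<bar> \<le> \<gamma> / 4"
    and excess: "(\<Sum>i=1..n. max (\<bar>y i\<bar> - K) 0) \<le> n * (\<gamma> / 4)"
  shows "\<gamma> / 4 \<le> \<bar>(\<Sum>i=1..n. clip K (y i)) / n - m\<bar>"
proof -
  have "\<bar>\<Sum>i=1..n. y i - clip K (y i)\<bar> \<le> n * (\<gamma> / 4)"
    using order_trans[OF sum_abs sum_mono[OF abs_diff_clip_le]] excess by (rule order_trans)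
  then have "\<bar>(\<Sum>i=1..n. y i - clip K (y i)) / n\<bar> \<le> \<gamma> / 4"
    using n by (simp add: divide_le_eq mult.commute)
  moreover have "(\<Sum>i=1..n. y i) / n
      = ((\<Sum>i=1..n. clip K (y i)) / n - m) + m + (\<Sum>i=1..n. y i - clip K (y i)) / n"
    by (simp add: sum_subtractf diff_divide_distrib)
  ultimately show ?thesis
    using far m by linarith
qed

lemma (in prob_space) iid_Hoeffding_abs:
  fixes X :: "nat \<Rightarrow> 'a \<Rightarrow> real" and g :: "real \<Rightarrow> real"
  assumes indep: "indep_vars (\<lambda>_. borel) X {1..}"
    and ident: "\<And>i. 1 \<le> i \<Longrightarrow> distr M borel (X i) = distr M borel (X 1)"
    and g: "g \<in> borel_measurable borel" "\<And>y. g y \<in> {a..b}" and ab: "a < b"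
    and n: "1 \<le> n" and \<epsilon>: "0 \<le> \<epsilon>"
  shows "prob {x\<in>space M. \<epsilon> \<le> \<bar>(\<Sum>i=1..n. g (X i x)) / n - expectation (\<lambda>x. g (X 1 x))\<bar>}
           \<le> 2 * exp (- 2 * real n * \<epsilon>\<^sup>2 / (b - a)\<^sup>2)"
proof -
  have rv: "X i \<in> borel_measurable M" if "1 \<le> i" for i
    using indep_vars_measurable[OF indep] that by simp
  interpret H: Hoeffding_ineq_iid M "{1..n}" "\<lambda>i x. g (X i x)" "\<lambda>x. g (X 1 x)" a b
    "expectation (\<lambda>x. g (X 1 x))"
  proof unfold_locales
    show "indep_vars (\<lambda>_. borel) (\<lambda>i x. g (X i x)) {1..n}"
      by (rule indep_vars_compose2[OF indep_vars_subset[OF indep], where Y="\<lambda>_. g"]) (use g in auto)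
    show "distr M borel (\<lambda>x. g (X i x)) = distr M borel (\<lambda>x. g (X 1 x))" if "i \<in> {1..n}" for i
      using that by (intro distr_borel_compose_eq[OF rv[of i] rv[of 1] ident[of i] g(1)]) auto
    show "random_variable borel (\<lambda>x. g (X 1 x))"
      using measurable_compose[OF rv g(1)] by simp
  qed (use g(2) in \<open>auto intro!: AE_I2\<close>)
  have "{1..n} \<noteq> {}"
    using n by simp
  from H.Hoeffding_ineq_abs_ge'[OF \<epsilon> ab this] show ?thesis
    by (simp only: card_atLeastAtMost diff_Suc_1)
qed

lemma (in prob_space) iid_clipped_mean_deviation_tail:
  fixes X :: "nat \<Rightarrow> 'a \<Rightarrow> real"
  assumes indep: "indep_vars (\<lambda>_. borel) X {1..}"
    and ident: "\<And>i. 1 \<le> i \<Longrightarrow> distr M borel (X i) = distr M borel (X 1)"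
    and K: "0 < K" and \<epsilon>: "0 \<le> \<epsilon>" and N: "1 \<le> N"
  shows "emeasure M {x\<in>space M. \<exists>n\<ge>N.
             \<epsilon> \<le> \<bar>(\<Sum>i=1..n. clip K (X i x - c)) / n - expectation (\<lambda>x. clip K (X 1 x - c))\<bar>}
           \<le> (\<Sum>m. ennreal (2 * exp (- real (m + N) * \<epsilon>\<^sup>2 / (2 * K\<^sup>2))))"
proof -
  define H where "H n = {x\<in>space M.
      \<epsilon> \<le> \<bar>(\<Sum>i=1..n. clip K (X i x - c)) / n - expectation (\<lambda>x. clip K (X 1 x - c))\<bar>}" for n :: nat
  have "(\<lambda>x. \<Sum>i=1..n. clip K (X i x - c)) \<in> borel_measurable M" for n
    using indep_vars_measurable[OF indep]
    by (intro borel_measurable_sum measurable_compose[OF _ borel_measurable_clip]) auto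
  then have H_sets: "H n \<in> events" for n
    unfolding H_def by measurable
  have H_prob: "emeasure M (H n) \<le> ennreal (2 * exp (- real n * \<epsilon>\<^sup>2 / (2 * K\<^sup>2)))" if "1 \<le> n" for n
  proof -
    have "prob (H n) \<le> 2 * exp (- 2 * real n * \<epsilon>\<^sup>2 / (K - - K)\<^sup>2)"
      unfolding H_def using K \<epsilon> that
      by (intro iid_Hoeffding_abs[OF indep ident, where g="\<lambda>y. clip K (y - c)"]) (auto simp: clip_def)
    also have "- 2 * real n * \<epsilon>\<^sup>2 / (K - - K)\<^sup>2 = - real n * \<epsilon>\<^sup>2 / (2 * K\<^sup>2)"
      by (simp add: power2_eq_square field_simps)
    finally show ?thesis
      by (simp add: emeasure_eq_measure ennreal_leI)
  qed
  have "{x\<in>space M. \<exists>n\<ge>N. \<epsilon> \<le> \<bar>(\<Sum>i=1..n. clip K (X i x - c)) / n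
          - expectation (\<lambda>x. clip K (X 1 x - c))\<bar>} \<subseteq> (\<Union>m. H (m + N))" (is "?D \<subseteq> _")
  proof clarify
    fix x n assume "x \<in> space M" "N \<le> n"
      "\<epsilon> \<le> \<bar>(\<Sum>i=1..n. clip K (X i x - c)) / n - expectation (\<lambda>x. clip K (X 1 x - c))\<bar>"
    then have "x \<in> H ((n - N) + N)"
      by (simp add: H_def)
    then show "x \<in> (\<Union>m. H (m + N))"
      by blast
  qed
  then have "emeasure M ?D \<le> emeasure M (\<Union>m. H (m + N))"
    using H_sets by (intro emeasure_mono) auto
  also have "\<dots> \<le> (\<Sum>m. emeasure M (H (m + N)))"
    using H_sets by (intro emeasure_subadditive_countably) auto
  also have "\<dots> \<le> (\<Sum>m. ennreal (2 * exp (- real (m + N) * \<epsilon>\<^sup>2 / (2 * K\<^sup>2))))"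
  proof (intro suminf_le summableI)
    show "emeasure M (H (m + N)) \<le> ennreal (2 * exp (- real (m + N) * \<epsilon>\<^sup>2 / (2 * K\<^sup>2)))" for m
      using H_prob[of "m + N"] N by simp
  qed
  finally show ?thesis .
qed

lemma (in prob_space) iid_excess_maximal_inequality:
  fixes X :: "nat \<Rightarrow> 'a \<Rightarrow> real"
  assumes indep: "indep_vars (\<lambda>_. borel) X {1..}"
    and ident: "\<And>i. 1 \<le> i \<Longrightarrow> distr M borel (X i) = distr M borel (X 1)"
    and int: "integrable M (X 1)"
  shows "\<delta> * prob {x\<in>space M. \<exists>k\<ge>1. real k * \<delta> < (\<Sum>i=1..k. max (\<bar>X i x - c\<bar> - K) 0)}
           \<le> expectation (\<lambda>x. max (\<bar>X 1 x - c\<bar> - K) 0)"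
proof -
  define g where "g y = max (\<bar>y - c\<bar> - K) 0" for y
  have g: "g \<in> borel_measurable borel"
    unfolding g_def[abs_def] by measurable
  have "\<delta> * prob {x\<in>space M. \<exists>k\<ge>1. real k * \<delta> < (\<Sum>i=1..k. g (X i x))} \<le> expectation (\<lambda>x. g (X 1 x))"
  proof (rule iid_nonneg_maximal_inequality)
    show "indep_vars (\<lambda>_. borel) (\<lambda>i x. g (X i x)) {1..}"
      by (rule indep_vars_compose2[OF indep, where Y="\<lambda>_. g"]) (rule g)
    show "distr M borel (\<lambda>x. g (X i x)) = distr M borel (\<lambda>x. g (X 1 x))" if "1 \<le> i" for i
      using indep_vars_measurable[OF indep] that
      by (intro distr_borel_compose_eq[OF _ _ ident[OF that] g]) auto
    show "integrable M (\<lambda>x. g (X 1 x))"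
      unfolding g_def using int
      by (intro integrable_max Bochner_Integration.integrable_diff Bochner_Integration.integrable_abs) auto
  qed (simp add: g_def)
  then show ?thesis
    by (simp add: g_def)
qed

lemma (in prob_space) expectation_excess_le_tail:
  fixes Y :: "'a \<Rightarrow> real"
  assumes Y: "integrable M Y" and "0 \<le> K"
  shows "ennreal (expectation (\<lambda>x. max (\<bar>Y x\<bar> - K) 0))
           \<le> (\<integral>\<^sup>+x. ennreal (\<bar>Y x\<bar> * indicator {x. \<bar>Y x\<bar> > K} x) \<partial>M)"
proof -
  have "integrable M (\<lambda>x. max (\<bar>Y x\<bar> - K) 0)"
    using Y by (intro integrable_max Bochner_Integration.integrable_diff Bochner_Integration.integrable_abs) auto
  then have "ennreal (expectation (\<lambda>x. max (\<bar>Y x\<bar> - K) 0))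
               = (\<integral>\<^sup>+x. ennreal (max (\<bar>Y x\<bar> - K) 0) \<partial>M)"
    by (intro nn_integral_eq_integral[symmetric]) auto
  also have "\<dots> \<le> (\<integral>\<^sup>+x. ennreal (\<bar>Y x\<bar> * indicator {x. \<bar>Y x\<bar> > K} x) \<partial>M)"
    using \<open>0 \<le> K\<close> by (intro nn_integral_mono ennreal_leI) (auto simp: indicator_def)
  finally show ?thesis .
qed

lemma (in prob_space) abs_expectation_clip_le:
  fixes Y :: "'a \<Rightarrow> real"
  assumes Y: "integrable M Y" and mean: "expectation Y = 0"
  shows "\<bar>expectation (\<lambda>x. clip K (Y x))\<bar> \<le> expectation (\<lambda>x. max (\<bar>Y x\<bar> - K) 0)"
proof -
  have Yc: "integrable M (\<lambda>x. clip K (Y x))"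
    using Y by (intro Bochner_Integration.integrable_bound[OF integrable_const[of "\<bar>K\<bar>"]])
      (auto simp: clip_def)
  have "\<bar>expectation (\<lambda>x. clip K (Y x))\<bar> = \<bar>expectation (\<lambda>x. Y x - clip K (Y x))\<bar>"
    using Y Yc mean by simp
  also have "\<dots> \<le> expectation (\<lambda>x. \<bar>Y x - clip K (Y x)\<bar>)"
    by (rule integral_abs_bound)
  also have "\<dots> \<le> expectation (\<lambda>x. max (\<bar>Y x\<bar> - K) 0)"
    using Y Yc abs_diff_clip_le
    by (intro integral_mono integrable_max Bochner_Integration.integrable_diff Bochner_Integration.integrable_abs) auto
  finally show ?thesis .
qed

lemma (in prob_space) iid_mean_deviation_tail:
  fixes X :: "nat \<Rightarrow> 'a \<Rightarrow> real"
  assumes indep: "indep_vars (\<lambda>_. borel) X {1..}"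
    and ident: "\<And>i. 1 \<le> i \<Longrightarrow> distr M borel (X i) = distr M borel (X 1)"
    and int: "integrable M (X 1)"
    and K: "0 < K" and \<gamma>: "0 < \<gamma>" and e: "e \<le> \<gamma> / 4"
    and excess: "expectation (\<lambda>x. max (\<bar>X 1 x - expectation (X 1)\<bar> - K) 0) \<le> e"
    and N: "1 \<le> N"
  shows "emeasure M {x\<in>space M. \<exists>n\<ge>N. \<gamma> < \<bar>(\<Sum>i=1..n. X i x) / n - expectation (X 1)\<bar>}
           \<le> ennreal (4 * e / \<gamma>) + (\<Sum>m. ennreal (2 * exp (- real (m + N) * (\<gamma> / 4)\<^sup>2 / (2 * K\<^sup>2))))"
proof -
  define \<mu> where "\<mu> = expectation (X 1)"
  define m where "m = expectation (\<lambda>x. clip K (X 1 x - \<mu>))"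
  define C where "C = {x\<in>space M. \<exists>n\<ge>N. \<gamma> / 4 \<le> \<bar>(\<Sum>i=1..n. clip K (X i x - \<mu>)) / n - m\<bar>}"
  define E where "E = {x\<in>space M. \<exists>k\<ge>1. real k * (\<gamma> / 4) < (\<Sum>i=1..k. max (\<bar>X i x - \<mu>\<bar> - K) 0)}"
  have m: "\<bar>m\<bar> \<le> \<gamma> / 4"
    using abs_expectation_clip_le[of "\<lambda>x. X 1 x - \<mu>" K] int excess e
    by (simp add: m_def \<mu>_def prob_space)
  have [measurable]: "X i \<in> borel_measurable M" if "1 \<le> i" for i
    using indep_vars_measurable[OF indep] that by simp
  have "C \<in> events" "E \<in> events"
    unfolding C_def E_def by measurable
  moreover have "{x\<in>space M. \<exists>n\<ge>N. \<gamma> < \<bar>(\<Sum>i=1..n. X i x) / n - \<mu>\<bar>} \<subseteq> C \<union> E"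
  proof clarify
    fix x n
    assume "x \<in> space M" "N \<le> n" "\<gamma> < \<bar>(\<Sum>i=1..n. X i x) / n - \<mu>\<bar>" "x \<notin> E"
    moreover have "(\<Sum>i=1..n. X i x) / n - \<mu> = (\<Sum>i=1..n. X i x - \<mu>) / n"
      using \<open>N \<le> n\<close> N by (simp add: sum_subtractf diff_divide_distrib)
    ultimately show "x \<in> C"
      using clipped_mean_far[of n \<gamma> "\<lambda>i. X i x - \<mu>" m K] m N
      by (auto simp: C_def E_def not_less mult.commute)
  qed
  ultimately have "emeasure M {x\<in>space M. \<exists>n\<ge>N. \<gamma> < \<bar>(\<Sum>i=1..n. X i x) / n - \<mu>\<bar>}
      \<le> emeasure M C + emeasure M E"
    by (intro order_trans[OF emeasure_mono emeasure_subadditive]) auto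
  also have "\<dots> \<le> (\<Sum>m. ennreal (2 * exp (- real (m + N) * (\<gamma> / 4)\<^sup>2 / (2 * K\<^sup>2)))) + ennreal (4 * e / \<gamma>)"
  proof (rule add_mono)
    show "emeasure M C \<le> (\<Sum>m. ennreal (2 * exp (- real (m + N) * (\<gamma> / 4)\<^sup>2 / (2 * K\<^sup>2))))"
      unfolding C_def m_def using K \<gamma> N by (intro iid_clipped_mean_deviation_tail[OF indep ident]) auto
    have "\<gamma> / 4 * prob E \<le> expectation (\<lambda>x. max (\<bar>X 1 x - \<mu>\<bar> - K) 0)"
      unfolding E_def by (rule iid_excess_maximal_inequality[OF indep ident int])
    then have "\<gamma> / 4 * prob E \<le> e"
      using excess by (simp add: \<mu>_def)
    then show "emeasure M E \<le> ennreal (4 * e / \<gamma>)"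
      using \<gamma> by (simp add: emeasure_eq_measure ennreal_leI field_simps)
  qed
  finally show ?thesis
    unfolding \<mu>_def by (simp only: add.commute)
qed

section \<open>Deviation bounds uniform in the law\<close>

lemma uniform_excess_bound:
  fixes X :: "nat \<Rightarrow> 'a \<Rightarrow> real" and \<P> :: "'a measure set"
  assumes prob: "\<And>P. P \<in> \<P> \<Longrightarrow> prob_space P"
    and integr: "\<And>P. P \<in> \<P> \<Longrightarrow> integrable P (X 1)"
    and UI: "((\<lambda>K::real. SUP P \<in> \<P>.
                 \<integral>\<^sup>+ \<omega>. ennreal (\<bar>X 1 \<omega> - (\<integral>x. X 1 x \<partial>P)\<bar>
                   * indicator {\<omega>. \<bar>X 1 \<omega> - (\<integral>x. X 1 x \<partial>P)\<bar> > K} \<omega>) \<partial>P)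
             \<longlongrightarrow> 0) at_top"
    and e: "0 < e"
  shows "\<exists>K>0. \<forall>P\<in>\<P>. (\<integral>x. max (\<bar>X 1 x - (\<integral>x. X 1 x \<partial>P)\<bar> - K) 0 \<partial>P) \<le> e"
proof -
  define tail where "tail P K = (\<integral>\<^sup>+ \<omega>. ennreal (\<bar>X 1 \<omega> - (\<integral>x. X 1 x \<partial>P)\<bar>
      * indicator {\<omega>. \<bar>X 1 \<omega> - (\<integral>x. X 1 x \<partial>P)\<bar> > K} \<omega>) \<partial>P)" for P K
  have "eventually (\<lambda>K. (SUP P \<in> \<P>. tail P K) < ennreal e \<and> 0 < K) at_top"
    using order_tendstoD(2)[OF UI[folded tail_def]] e
    by (intro eventually_conj eventually_gt_at_top) auto
  then obtain K where K: "0 < K" and "(SUP P \<in> \<P>. tail P K) < ennreal e"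
    unfolding eventually_at_top_linorder by auto
  then have tail_K: "tail P K \<le> ennreal e" if "P \<in> \<P>" for P
    using SUP_upper[OF that, of "\<lambda>P. tail P K"] by simp
  have "(\<integral>x. max (\<bar>X 1 x - (\<integral>x. X 1 x \<partial>P)\<bar> - K) 0 \<partial>P) \<le> e" if "P \<in> \<P>" for P
  proof -
    interpret prob_space P
      using prob[OF that] .
    have "ennreal (expectation (\<lambda>x. max (\<bar>X 1 x - expectation (X 1)\<bar> - K) 0)) \<le> tail P K"
      unfolding tail_def using integr[OF that] K by (intro expectation_excess_le_tail) auto
    also have "\<dots> \<le> ennreal e"
      using tail_K[OF that] .
    finally show ?thesis
      using e by (simp add: ennreal_le_iff)
  qed
  with K show ?thesis
    by blast
qed

lemma uniform_mean_deviation_tail: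
  fixes X :: "nat \<Rightarrow> 'a \<Rightarrow> real" and \<P> :: "'a measure set"
  assumes prob: "\<And>P. P \<in> \<P> \<Longrightarrow> prob_space P"
    and indep: "\<And>P. P \<in> \<P> \<Longrightarrow> prob_space.indep_vars P (\<lambda>_. borel) X {1..}"
    and ident: "\<And>P t. P \<in> \<P> \<Longrightarrow> t \<ge> 1 \<Longrightarrow> distr P borel (X t) = distr P borel (X 1)"
    and integr: "\<And>P. P \<in> \<P> \<Longrightarrow> integrable P (X 1)"
    and UI: "((\<lambda>K::real. SUP P \<in> \<P>.
                 \<integral>\<^sup>+ \<omega>. ennreal (\<bar>X 1 \<omega> - (\<integral>x. X 1 x \<partial>P)\<bar>
                   * indicator {\<omega>. \<bar>X 1 \<omega> - (\<integral>x. X 1 x \<partial>P)\<bar> > K} \<omega>) \<partial>P)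
             \<longlongrightarrow> 0) at_top"
    and \<gamma>: "0 < \<gamma>" and \<epsilon>: "0 < \<epsilon>"
  shows "\<exists>N. \<forall>P\<in>\<P>. emeasure P {x\<in>space P. \<exists>n\<ge>N. \<gamma> < \<bar>(\<Sum>i=1..n. X i x) / n - (\<integral>x. X 1 x \<partial>P)\<bar>}
           \<le> ennreal \<epsilon>"
proof -
  \<comment> \<open>e bounds the clipping bias (e \<le> \<gamma>/4) and, through the maximal inequality, the excess part.\<close>
  define e where "e = min (\<gamma> / 4) (\<epsilon> * \<gamma> / 8)"
  have e: "0 < e" "e \<le> \<gamma> / 4" "4 * e / \<gamma> \<le> \<epsilon> / 2"
    using \<gamma> \<epsilon> by (auto simp: e_def field_simps min_def)
  obtain K where K: "0 < K"
    and excess: "\<And>P. P \<in> \<P> \<Longrightarrow> (\<integral>x. max (\<bar>X 1 x - (\<integral>x. X 1 x \<partial>P)\<bar> - K) 0 \<partial>P) \<le> e"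
    using uniform_excess_bound[where X=X, OF prob integr UI e(1)] by blast
  define f where "f m = 2 * exp (- real m * (\<gamma> / 4)\<^sup>2 / (2 * K\<^sup>2))" for m :: nat
  have f_geometric: "f m = 2 * exp (- ((\<gamma> / 4)\<^sup>2 / (2 * K\<^sup>2))) ^ m" for m
    by (simp add: f_def exp_of_nat_mult[symmetric])
  have f_summable: "summable f"
    unfolding f_geometric[abs_def] using \<gamma> K by (intro summable_mult summable_geometric) simp
  have f_nonneg: "0 \<le> f m" for m
    by (simp add: f_def)
  obtain N0 where N0: "\<And>n. n \<ge> N0 \<Longrightarrow> norm (\<Sum>m. f (m + n)) < \<epsilon> / 2"
    using suminf_exist_split[OF _ f_summable, of "\<epsilon> / 2"] \<epsilon> by auto
  define N where "N = max N0 1"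
  show ?thesis
  proof (intro exI[of _ N] ballI)
    fix P assume P: "P \<in> \<P>"
    interpret prob_space P using prob[OF P] .
    have "emeasure P {x\<in>space P. \<exists>n\<ge>N. \<gamma> < \<bar>(\<Sum>i=1..n. X i x) / n - expectation (X 1)\<bar>}
            \<le> ennreal (4 * e / \<gamma>) + (\<Sum>m. ennreal (f (m + N)))"
      unfolding f_def using excess[OF P] K \<gamma> e
      by (intro iid_mean_deviation_tail[OF indep[OF P] ident[OF P] integr[OF P]]) (auto simp: N_def)
    also have "\<dots> = ennreal (4 * e / \<gamma> + (\<Sum>m. f (m + N)))"
      using f_summable e(1) \<gamma> f_nonneg
      by (simp add: suminf_ennreal2 ennreal_plus suminf_nonneg summable_iff_shift)
    also have "\<dots> \<le> ennreal \<epsilon>"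
      using N0[of N] e(3) by (intro ennreal_leI) (auto simp: N_def)
    finally show "emeasure P {x\<in>space P. \<exists>n\<ge>N. \<gamma> < \<bar>(\<Sum>i=1..n. X i x) / n - expectation (X 1)\<bar>}
        \<le> ennreal \<epsilon>" .
  qed
qed

section \<open>Inverse capital of non-convergence\<close>

lemma inv_capital_le_hitting:
  fixes G :: "nat \<Rightarrow> 'a \<Rightarrow> bool"
  assumes mono: "\<And>s t \<omega>. G s \<omega> \<Longrightarrow> s \<le> t \<Longrightarrow> G t \<omega>"
    and adapted: "\<And>t. {\<omega>\<in>\<Omega>. G t \<omega>} \<in> F t"
    and cover: "A \<subseteq> {\<omega>\<in>\<Omega>. \<exists>t. G t \<omega>}"
  shows "inv_capital \<Omega> F \<P> A \<le> (SUP P\<in>\<P>. emeasure P {\<omega>\<in>\<Omega>. \<exists>t. G t \<omega>})"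
proof -
  define \<tau> where "\<tau> \<omega> = (if \<exists>t. G t \<omega> then enat (LEAST t. G t \<omega>) else \<infinity>)" for \<omega>
  have \<tau>_le_iff: "\<tau> \<omega> \<le> enat t \<longleftrightarrow> G t \<omega>" for \<omega> t
  proof
    assume le: "\<tau> \<omega> \<le> enat t"
    then have ex: "\<exists>t. G t \<omega>"
      by (auto simp: \<tau>_def split: if_splits)
    then have "(LEAST t. G t \<omega>) \<le> t"
      using le by (simp add: \<tau>_def)
    then show "G t \<omega>"
      using LeastI_ex[OF ex] by (rule mono[rotated])
  qed (auto simp: \<tau>_def intro: Least_le)
  have "stopping_time_nat \<Omega> F \<tau>"
    unfolding stopping_time_nat_def \<tau>_le_iff using adapted by blast
  moreover have "{\<omega>\<in>\<Omega>. \<tau> \<omega> < \<infinity>} = {\<omega>\<in>\<Omega>. \<exists>t. G t \<omega>}"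
    by (auto simp: \<tau>_def)
  ultimately show ?thesis
    unfolding inv_capital_def using cover by (intro INF_lower2[of \<tau>]) auto
qed

definition cauchy_gap :: "(nat \<Rightarrow> nat) \<Rightarrow> (nat \<Rightarrow> 'a \<Rightarrow> real) \<Rightarrow> nat \<Rightarrow> 'a \<Rightarrow> bool" where
  "cauchy_gap N a t \<omega> \<longleftrightarrow>
     (\<exists>k m n. N k \<le> m \<and> m \<le> t \<and> N k \<le> n \<and> n \<le> t \<and> 2 / real (k + 1) < \<bar>a m \<omega> - a n \<omega>\<bar>)"

lemma cauchy_gap_mono: "cauchy_gap N a s \<omega> \<Longrightarrow> s \<le> t \<Longrightarrow> cauchy_gap N a t \<omega>"
  unfolding cauchy_gap_def by (meson order_trans)

lemma not_convergent_imp_cauchy_gap: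
  fixes a :: "nat \<Rightarrow> 'a \<Rightarrow> real"
  assumes "\<not> convergent (\<lambda>n. a n \<omega>)"
  shows "\<exists>t. cauchy_gap N a t \<omega>"
proof -
  obtain d where d: "0 < d" and gaps: "\<And>M. \<exists>m\<ge>M. \<exists>n\<ge>M. d \<le> dist (a m \<omega>) (a n \<omega>)"
    using assms unfolding Cauchy_convergent_iff[symmetric] Cauchy_def by (auto simp: not_less)
  obtain k :: nat where "2 / d < k"
    using reals_Archimedean2 by blast
  then have "2 / real (k + 1) < d"
    using d by (simp add: field_simps)
  moreover obtain m n where "N k \<le> m" "N k \<le> n" "d \<le> dist (a m \<omega>) (a n \<omega>)"
    using gaps by blast
  ultimately have "cauchy_gap N a (max m n) \<omega>"
    unfolding cauchy_gap_def dist_real_def by (intro exI[of _ k] exI[of _ m] exI[of _ n]) auto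
  then show ?thesis ..
qed

lemma cauchy_gap_adapted:
  assumes "sigma_algebra \<Omega> (F t)"
    and adapted: "\<And>m. m \<le> t \<Longrightarrow> a m \<in> borel_measurable (sigma \<Omega> (F t))"
  shows "{\<omega>\<in>\<Omega>. cauchy_gap N a t \<omega>} \<in> F t"
proof -
  have "{\<omega>\<in>\<Omega>. cauchy_gap N a t \<omega>} = (\<Union>k. \<Union>m\<in>{N k..t}. \<Union>n\<in>{N k..t}.
          {\<omega>\<in>space (sigma \<Omega> (F t)). 2 / real (k + 1) < \<bar>a m \<omega> - a n \<omega>\<bar>})"
    unfolding cauchy_gap_def space_measure_of_conv by force
  also have "\<dots> \<in> sets (sigma \<Omega> (F t))"
    using adapted by (intro sets.countable_UN sets.finite_UN finite_atLeastAtMost ballI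
        borel_measurable_iff_greater[THEN iffD1] borel_measurable_abs borel_measurable_diff) auto
  finally show ?thesis
    using assms(1) by (simp add: sigma_algebra.sets_measure_of_eq)
qed

lemma suminf_ennreal_halves: "0 \<le> \<epsilon> \<Longrightarrow> (\<Sum>k. ennreal (\<epsilon> / 2 ^ (k + 1))) = ennreal \<epsilon>"
proof -
  assume "0 \<le> \<epsilon>"
  have sums: "(\<lambda>k. \<epsilon> / 2 ^ (k + 1)) sums \<epsilon>"
    using sums_mult[OF power_half_series, of \<epsilon>] by (simp add: field_simps)
  then show ?thesis
    using \<open>0 \<le> \<epsilon>\<close> by (simp add: suminf_ennreal2 sums_summable sums_unique[symmetric])
qed

lemma emeasure_cauchy_gap_le:
  fixes a :: "nat \<Rightarrow> 'a \<Rightarrow> real"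
  assumes measurable: "\<And>n. a n \<in> borel_measurable M"
    and tail: "\<And>k. emeasure M {\<omega>\<in>space M. \<exists>n\<ge>N k. 1 / real (k + 1) < \<bar>a n \<omega> - c\<bar>}
                      \<le> ennreal (\<epsilon> / 2 ^ (k + 1))"
    and \<epsilon>: "0 \<le> \<epsilon>"
  shows "emeasure M {\<omega>\<in>space M. \<exists>t. cauchy_gap N a t \<omega>} \<le> ennreal \<epsilon>"
proof -
  define B where "B k = {\<omega>\<in>space M. \<exists>n\<ge>N k. 1 / real (k + 1) < \<bar>a n \<omega> - c\<bar>}" for k
  have B_sets: "B k \<in> sets M" for k
  proof -
    have "B k = (\<Union>n\<in>{N k..}. {\<omega>\<in>space M. 1 / real (k + 1) < \<bar>a n \<omega> - c\<bar>})"
      unfolding B_def by auto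
    also have "\<dots> \<in> sets M"
      using measurable by measurable
    finally show ?thesis .
  qed
  have "{\<omega>\<in>space M. \<exists>t. cauchy_gap N a t \<omega>} \<subseteq> (\<Union>k. B k)"
  proof clarify
    fix \<omega> t assume "\<omega> \<in> space M" "cauchy_gap N a t \<omega>"
    then obtain k m n where kmn: "N k \<le> m" "N k \<le> n" "2 / real (k + 1) < \<bar>a m \<omega> - a n \<omega>\<bar>"
      unfolding cauchy_gap_def by blast
    then have "1 / real (k + 1) < \<bar>a m \<omega> - c\<bar> \<or> 1 / real (k + 1) < \<bar>a n \<omega> - c\<bar>"
      by (auto simp: add_divide_distrib[symmetric])
    with \<open>\<omega> \<in> space M\<close> kmn show "\<omega> \<in> (\<Union>k. B k)"
      unfolding B_def by blast
  qed
  then have "emeasure M {\<omega>\<in>space M. \<exists>t. cauchy_gap N a t \<omega>} \<le> emeasure M (\<Union>k. B k)"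
    using B_sets by (intro emeasure_mono) auto
  also have "\<dots> \<le> (\<Sum>k. emeasure M (B k))"
    using B_sets by (intro emeasure_subadditive_countably) auto
  also have "\<dots> \<le> (\<Sum>k. ennreal (\<epsilon> / 2 ^ (k + 1)))"
    using tail by (intro suminf_le summableI) (simp add: B_def)
  finally show ?thesis
    using suminf_ennreal_halves[OF \<epsilon>] by simp
qed

lemma inv_capital_not_convergent_eq_0:
  fixes a :: "nat \<Rightarrow> 'a \<Rightarrow> real" and c :: "'a measure \<Rightarrow> real"
  assumes filtration: "\<And>t. sigma_algebra \<Omega> (F t)"
    and adapted: "\<And>m t. m \<le> t \<Longrightarrow> a m \<in> borel_measurable (sigma \<Omega> (F t))"
    and space: "\<And>P. P \<in> \<P> \<Longrightarrow> space P = \<Omega>"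
    and measurable: "\<And>P n. P \<in> \<P> \<Longrightarrow> a n \<in> borel_measurable P"
    and uniform: "\<And>\<gamma> \<delta>. 0 < \<gamma> \<Longrightarrow> 0 < \<delta> \<Longrightarrow>
      \<exists>N. \<forall>P\<in>\<P>. emeasure P {\<omega>\<in>space P. \<exists>n\<ge>N. \<gamma> < \<bar>a n \<omega> - c P\<bar>} \<le> ennreal \<delta>"
  shows "inv_capital \<Omega> F \<P> {\<omega>\<in>\<Omega>. \<not> convergent (\<lambda>n. a n \<omega>)} = 0"
proof (rule antisym[OF ennreal_le_epsilon zero_le])
  fix \<epsilon> :: real assume "0 < \<epsilon>"
  have "\<forall>k. \<exists>N. \<forall>P\<in>\<P>. emeasure P {\<omega>\<in>space P. \<exists>n\<ge>N. 1 / real (k + 1) < \<bar>a n \<omega> - c P\<bar>}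
                    \<le> ennreal (\<epsilon> / 2 ^ (k + 1))"
    using \<open>0 < \<epsilon>\<close> by (intro allI uniform) simp_all
  from choice[OF this] obtain N where N: "\<forall>k. \<forall>P\<in>\<P>.
      emeasure P {\<omega>\<in>space P. \<exists>n\<ge>N k. 1 / real (k + 1) < \<bar>a n \<omega> - c P\<bar>} \<le> ennreal (\<epsilon> / 2 ^ (k + 1))"
    by blast
  have "inv_capital \<Omega> F \<P> {\<omega>\<in>\<Omega>. \<not> convergent (\<lambda>n. a n \<omega>)}
          \<le> (SUP P\<in>\<P>. emeasure P {\<omega>\<in>\<Omega>. \<exists>t. cauchy_gap N a t \<omega>})"
  proof (rule inv_capital_le_hitting)
    show "cauchy_gap N a t \<omega>" if "cauchy_gap N a s \<omega>" "s \<le> t" for s t \<omega>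
      using that by (rule cauchy_gap_mono)
    show "{\<omega>\<in>\<Omega>. cauchy_gap N a t \<omega>} \<in> F t" for t
      using filtration adapted by (rule cauchy_gap_adapted)
    show "{\<omega>\<in>\<Omega>. \<not> convergent (\<lambda>n. a n \<omega>)} \<subseteq> {\<omega>\<in>\<Omega>. \<exists>t. cauchy_gap N a t \<omega>}"
      using not_convergent_imp_cauchy_gap[of a] by blast
  qed
  also have "\<dots> \<le> ennreal \<epsilon>"
  proof (rule SUP_least)
    fix P assume P: "P \<in> \<P>"
    have "emeasure P {\<omega>\<in>space P. \<exists>t. cauchy_gap N a t \<omega>} \<le> ennreal \<epsilon>"
      using measurable[OF P] bspec[OF spec[OF N] P] \<open>0 < \<epsilon>\<close>
      by (intro emeasure_cauchy_gap_le[where c="c P"]) auto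
    then show "emeasure P {\<omega>\<in>\<Omega>. \<exists>t. cauchy_gap N a t \<omega>} \<le> ennreal \<epsilon>"
      using space[OF P] by simp
  qed
  finally show "inv_capital \<Omega> F \<P> {\<omega>\<in>\<Omega>. \<not> convergent (\<lambda>n. a n \<omega>)} \<le> 0 + ennreal \<epsilon>"
    by simp
qed

lemma filtered_space_measurable_mono:
  assumes "filtered_space \<Omega> F \<F>" "s \<le> t" "f \<in> borel_measurable (sigma \<Omega> (F s))"
  shows "f \<in> borel_measurable (sigma \<Omega> (F t))"
proof -
  have "F s \<subseteq> F t"
    using assms(1,2) lift_Suc_mono_le[of F] unfolding filtered_space_def by blast
  with assms(1) have "sets (sigma \<Omega> (F s)) \<subseteq> sets (sigma \<Omega> (F t))"
    unfolding filtered_space_def by (simp add: sigma_algebra.sets_measure_of_eq)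
  then show ?thesis
    using assms(3) measurable_mono[of borel borel "sigma \<Omega> (F s)" "sigma \<Omega> (F t)"]
    by (auto simp: space_measure_of_conv)
qed

theorem mainTheorem8:
  fixes \<Omega> :: "'a set" and F :: "nat \<Rightarrow> 'a set set" and \<F> :: "'a set set"
    and X :: "nat \<Rightarrow> 'a \<Rightarrow> real" and \<P> :: "'a measure set"
  assumes filt: "filtered_space \<Omega> F \<F>"
    and adapted: "\<And>t. t \<ge> 1 \<Longrightarrow> X t \<in> measurable (sigma \<Omega> (F t)) borel"
    and probs: "\<And>P. P \<in> \<P> \<Longrightarrow> prob_space P \<and> space P = \<Omega> \<and> sets P = \<F>"
    and indep: "\<And>P. P \<in> \<P> \<Longrightarrow> prob_space.indep_vars P (\<lambda>_. borel) X {1..}"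
    and ident: "\<And>P t. P \<in> \<P> \<Longrightarrow> t \<ge> 1 \<Longrightarrow> distr P borel (X t) = distr P borel (X 1)"
    and integr: "\<And>P. P \<in> \<P> \<Longrightarrow> integrable P (X 1)"
    and UI: "((\<lambda>K::real. SUP P \<in> \<P>.
                 \<integral>\<^sup>+ \<omega>. ennreal (\<bar>X 1 \<omega> - (\<integral>x. X 1 x \<partial>P)\<bar>
                   * indicator {\<omega>. \<bar>X 1 \<omega> - (\<integral>x. X 1 x \<partial>P)\<bar> > K} \<omega>) \<partial>P)
             \<longlongrightarrow> 0) at_top"
  shows "inv_capital \<Omega> F \<P>
           {\<omega> \<in> \<Omega>. \<not> convergent (\<lambda>t. (\<Sum>i=1..t. X i \<omega>) / real t)} = 0"
proof -
  define a where "a n \<omega> = (\<Sum>i=1..n. X i \<omega>) / real n" for n \<omega>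
  have a_adapted: "a m \<in> borel_measurable (sigma \<Omega> (F t))" if "m \<le> t" for m t
    unfolding a_def using that
    by (intro borel_measurable_divide borel_measurable_sum borel_measurable_const
        filtered_space_measurable_mono[OF filt _ adapted]) auto
  have a_measurable: "a n \<in> borel_measurable P" if "P \<in> \<P>" for P n
  proof -
    have "X i \<in> borel_measurable P" if "i \<ge> 1" for i
      using prob_space.indep_vars_measurable[OF _ indep] probs \<open>P \<in> \<P>\<close> that by simp
    then show ?thesis
      unfolding a_def by (intro borel_measurable_divide borel_measurable_sum borel_measurable_const) auto
  qed
  have uniform: "\<exists>N. \<forall>P\<in>\<P>. emeasure P {\<omega>\<in>space P. \<exists>n\<ge>N. \<gamma> < \<bar>a n \<omega> - (\<integral>x. X 1 x \<partial>P)\<bar>}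
                      \<le> ennreal \<delta>" if "0 < \<gamma>" "0 < \<delta>" for \<gamma> \<delta>
    unfolding a_def using probs by (intro uniform_mean_deviation_tail[OF _ indep ident integr UI that]) blast
  have "inv_capital \<Omega> F \<P> {\<omega>\<in>\<Omega>. \<not> convergent (\<lambda>n. a n \<omega>)} = 0"
  proof (rule inv_capital_not_convergent_eq_0[where a=a and c="\<lambda>P. \<integral>x. X 1 x \<partial>P"])
    show "sigma_algebra \<Omega> (F t)" for t
      using filt unfolding filtered_space_def by blast
    show "space P = \<Omega>" if "P \<in> \<P>" for P
      using probs[OF that] by blast
  qed (use a_adapted a_measurable uniform in auto)
  then show ?thesis
    by (simp add: a_def)
qed

end
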